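(* Let $T:[0,1]\to[0,1]$ be a nonsingular measurable map with transfer operator $L$, let $\rho_\xi=\xi^{-1}\mathbf 1_{[-\xi/2,\xi/2]}$ and $N_\xi$ the associated noise operator. Suppose $\|(N_\xi L)^i\|_{V\to L^1}<1$ for some $i$. Then for each $\hat\xi>\xi$, $\|(N_{\hat\xi}L)^i\|_{V\to L^1}<1$, and the system is mixing for every noise size greater than $\xi$.
   Context: $L$ is the pushforward by $T$ on $L^1([0,1])$. With $\pi(x)=\min_{i\in\mathbb Z}|x-2i|$, $N_\xi f=\pi_*(\rho_\xi*\hat f)$ ($\hat f$ the extension of $f$ by $0$, $\pi_*$ pushforward by $\pi$). $V=\{\nu\in L^1([0,1]):\int\nu=0\}$ and $\|\cdot\|_{V\to L^1}$ is the $L^1$ operator norm of the restriction to $V$. The system with noise size $\hat\xi$ is called mixing if $\|(N_{\hat\xi}L)^n\nu\|_{L^1}\to0$ as $n\to\infty$ for every $\nu\in V$. *)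

theory Defs
  imports "HOL-Analysis.Analysis"
begin

abbreviation I01 :: "real measure" where
  "I01 \<equiv> lebesgue_on {0..1}"

text \<open>Pushforward of a (signed) density f on M by a map S : M \<rightarrow> N, as a density on N
  (Radon--Nikodym derivative of the image of f M, split into positive and negative parts).\<close>
definition push_dens :: "'a measure \<Rightarrow> 'b measure \<Rightarrow> ('a \<Rightarrow> 'b) \<Rightarrow> ('a \<Rightarrow> real) \<Rightarrow> 'b \<Rightarrow> real" where
  "push_dens M N S f = (\<lambda>y.
     enn2real (RN_deriv N (distr (density M (\<lambda>x. ennreal (f x))) N S) y)
   - enn2real (RN_deriv N (distr (density M (\<lambda>x. ennreal (- f x))) N S) y))"

definition transfer_op :: "(real \<Rightarrow> real) \<Rightarrow> (real \<Rightarrow> real) \<Rightarrow> real \<Rightarrow> real" where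
  "transfer_op T = push_dens I01 I01 T"

definition nonsingular :: "(real \<Rightarrow> real) \<Rightarrow> bool" where
  "nonsingular T \<longleftrightarrow> T \<in> measurable I01 I01 \<and>
     (\<forall>A\<in>sets I01. emeasure I01 A = 0 \<longrightarrow> emeasure I01 (T -` A \<inter> space I01) = 0)"

definition rho :: "real \<Rightarrow> real \<Rightarrow> real" where
  "rho \<xi> x = (if x \<in> {-\<xi>/2..\<xi>/2} then 1 / \<xi> else 0)"

definition conv :: "(real \<Rightarrow> real) \<Rightarrow> (real \<Rightarrow> real) \<Rightarrow> real \<Rightarrow> real" where
  "conv g h = (\<lambda>y. \<integral>x. g (y - x) * h x \<partial>lebesgue)"

definition ext0 :: "(real \<Rightarrow> real) \<Rightarrow> real \<Rightarrow> real" where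
  "ext0 f x = (if x \<in> {0..1} then f x else 0)"

definition fold_pi :: "real \<Rightarrow> real" where
  "fold_pi x = (INF i\<in>(UNIV::int set). \<bar>x - 2 * of_int i\<bar>)"

definition noise_op :: "real \<Rightarrow> (real \<Rightarrow> real) \<Rightarrow> real \<Rightarrow> real" where
  "noise_op \<xi> f = push_dens lebesgue I01 fold_pi (conv (rho \<xi>) (ext0 f))"

definition l1norm :: "(real \<Rightarrow> real) \<Rightarrow> real" where
  "l1norm f = (\<integral>x. \<bar>f x\<bar> \<partial>I01)"

definition V0 :: "(real \<Rightarrow> real) set" where
  "V0 = {\<nu>. integrable I01 \<nu> \<and> (\<integral>x. \<nu> x \<partial>I01) = 0}"

definition opnorm_V :: "((real \<Rightarrow> real) \<Rightarrow> (real \<Rightarrow> real)) \<Rightarrow> ereal" where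
  "opnorm_V A = (SUP \<nu>\<in>{\<nu>\<in>V0. l1norm \<nu> \<le> 1}. ereal (l1norm (A \<nu>)))"

definition mixing :: "(real \<Rightarrow> real) \<Rightarrow> real \<Rightarrow> bool" where
  "mixing T \<xi> \<longleftrightarrow> (\<forall>\<nu>\<in>V0.
     (\<lambda>n. l1norm (((noise_op \<xi> \<circ> transfer_op T) ^^ n) \<nu>)) \<longlonglongrightarrow> 0)"

end

theory Submission
  imports Defs
begin

text \<open>Both the transfer operator and the noise operators are Markov operators: positive,
  linear and integral preserving on L1. On nonnegative densities the wider kernel dominates the
  narrower one, \<rho>_\<xi>' \<ge> (\<xi>/\<xi>') \<rho>_\<xi>, and this comparison survives the folding, the
  composition with L and iteration. Hence, with c = \<xi>/\<xi>', (N_\<xi>' L)^i is c^i (N_\<xi> L)^i plus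
  a positive operator of mass 1 - c^i, so its norm on V is at most c^i r + (1 - c^i) < 1, where
  r < 1 is the norm of (N_\<xi> L)^i. A Markov operator with a power contracting V by a factor
  s < 1 sends every zero-mean density to 0 at rate s^(n div i).\<close>

section \<open>Markov operators\<close>

locale markov_map =
  fixes M :: "'a measure" and N :: "'b measure" and P :: "('a \<Rightarrow> real) \<Rightarrow> 'b \<Rightarrow> real"
  assumes integrable_image: "integrable M f \<Longrightarrow> integrable N (P f)"
    and integral_image: "integrable M f \<Longrightarrow> (\<integral>y. P f y \<partial>N) = (\<integral>x. f x \<partial>M)"
    and image_nonneg: "integrable M f \<Longrightarrow> AE x in M. 0 \<le> f x \<Longrightarrow> AE y in N. 0 \<le> P f y"
    and image_AE_cong:
      "integrable M f \<Longrightarrow> integrable M g \<Longrightarrow> AE x in M. f x = g x \<Longrightarrow> AE y in N. P f y = P g y"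
    and image_linear: "integrable M f \<Longrightarrow> integrable M g \<Longrightarrow>
      AE y in N. P (\<lambda>x. a * f x + b * g x) y = a * P f y + b * P g y"
begin

lemma image_scale: "integrable M f \<Longrightarrow> AE y in N. P (\<lambda>x. c * f x) y = c * P f y"
  using image_linear[of f f c 0] by simp

lemma image_diff:
  "integrable M f \<Longrightarrow> integrable M g \<Longrightarrow> AE y in N. P (\<lambda>x. f x - g x) y = P f y - P g y"
  using image_linear[of f g 1 "-1"] by simp

lemma image_mono:
  assumes f: "integrable M f" and g: "integrable M g" and le: "AE x in M. f x \<le> g x"
  shows "AE y in N. P f y \<le> P g y"
proof -
  have "AE y in N. 0 \<le> P (\<lambda>x. g x - f x) y"
    using f g le by (intro image_nonneg) auto
  with image_diff[OF g f] show ?thesis by eventually_elim auto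
qed

end

lemma markov_map_id: "markov_map M M id"
  by unfold_locales auto

lemma markov_map_comp:
  assumes P: "markov_map M N P" and Q: "markov_map L M Q"
  shows "markov_map L N (P \<circ> Q)"
proof -
  interpret P: markov_map M N P by (rule P)
  interpret Q: markov_map L M Q by (rule Q)
  show ?thesis
  proof
    fix f g :: "_ \<Rightarrow> real" and a b :: real
    assume f: "integrable L f"
    show "integrable N ((P \<circ> Q) f)" using P.integrable_image[OF Q.integrable_image[OF f]] by simp
    show "(\<integral>y. (P \<circ> Q) f y \<partial>N) = (\<integral>x. f x \<partial>L)"
      using P.integral_image[OF Q.integrable_image[OF f]] Q.integral_image[OF f] by simp
    show "AE y in N. 0 \<le> (P \<circ> Q) f y" if "AE x in L. 0 \<le> f x"
      using P.image_nonneg[OF Q.integrable_image[OF f] Q.image_nonneg[OF f that]] by simp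
    assume g: "integrable L g"
    show "AE y in N. (P \<circ> Q) f y = (P \<circ> Q) g y" if "AE x in L. f x = g x"
      using P.image_AE_cong[OF Q.integrable_image[OF f] Q.integrable_image[OF g]
          Q.image_AE_cong[OF f g that]] by simp
    have Qfg: "integrable M (\<lambda>y. a * Q f y + b * Q g y)"
      using Q.integrable_image[OF f] Q.integrable_image[OF g] by auto
    have "AE z in N. P (Q (\<lambda>x. a * f x + b * g x)) z = P (\<lambda>y. a * Q f y + b * Q g y) z"
      using f g by (intro P.image_AE_cong[OF _ Qfg] Q.image_linear Q.integrable_image) auto
    with P.image_linear[OF Q.integrable_image[OF f] Q.integrable_image[OF g], of a b]
    show "AE z in N. (P \<circ> Q) (\<lambda>x. a * f x + b * g x) z = a * (P \<circ> Q) f z + b * (P \<circ> Q) g z"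
      by eventually_elim simp
  qed
qed

lemma markov_map_funpow: "markov_map M M P \<Longrightarrow> markov_map M M (P ^^ n)"
  by (induction n) (auto simp: markov_map_id markov_map_comp)

lemma integral_abs_eq_pos_neg:
  fixes f :: "'a \<Rightarrow> real"
  assumes "integrable M f"
  shows "(\<integral>x. \<bar>f x\<bar> \<partial>M) = (\<integral>x. max (f x) 0 \<partial>M) + (\<integral>x. max (- f x) 0 \<partial>M)"
proof -
  have "(\<integral>x. \<bar>f x\<bar> \<partial>M) = (\<integral>x. max (f x) 0 + max (- f x) 0 \<partial>M)"
    by (rule Bochner_Integration.integral_cong) auto
  also have "\<dots> = (\<integral>x. max (f x) 0 \<partial>M) + (\<integral>x. max (- f x) 0 \<partial>M)"
    using assms by (intro Bochner_Integration.integral_add) auto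
  finally show ?thesis .
qed

lemma integral_abs_le_if_positive_linear:
  fixes Q :: "('a \<Rightarrow> real) \<Rightarrow> 'b \<Rightarrow> real"
  assumes int: "\<And>f. integrable M f \<Longrightarrow> integrable N (Q f)"
    and pos: "\<And>f. integrable M f \<Longrightarrow> AE x in M. 0 \<le> f x \<Longrightarrow> AE y in N. 0 \<le> Q f y"
    and diff: "\<And>f g. integrable M f \<Longrightarrow> integrable M g \<Longrightarrow>
      AE y in N. Q (\<lambda>x. f x - g x) y = Q f y - Q g y"
    and mass: "\<And>f. integrable M f \<Longrightarrow> AE x in M. 0 \<le> f x \<Longrightarrow>
      (\<integral>y. Q f y \<partial>N) = \<kappa> * (\<integral>x. f x \<partial>M)"
    and f: "integrable M f"
  shows "(\<integral>y. \<bar>Q f y\<bar> \<partial>N) \<le> \<kappa> * (\<integral>x. \<bar>f x\<bar> \<partial>M)"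
proof -
  define p where "p = (\<lambda>x. max (f x) 0)"
  define m where "m = (\<lambda>x. max (- f x) 0)"
  have p: "integrable M p" and m: "integrable M m" using f by (auto simp: p_def m_def)
  have pn: "AE x in M. 0 \<le> p x" and mn: "AE x in M. 0 \<le> m x" by (auto simp: p_def m_def)
  have "f = (\<lambda>x. p x - m x)" by (auto simp: p_def m_def fun_eq_iff)
  then have split: "AE y in N. Q f y = Q p y - Q m y" using diff[OF p m] by simp
  have "(\<integral>y. \<bar>Q f y\<bar> \<partial>N) \<le> (\<integral>y. Q p y + Q m y \<partial>N)"
  proof (rule integral_mono_AE)
    show "AE y in N. \<bar>Q f y\<bar> \<le> Q p y + Q m y"
      using split pos[OF p pn] pos[OF m mn] by eventually_elim auto
  qed (use int[OF f] int[OF p] int[OF m] in auto)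
  also have "\<dots> = \<kappa> * ((\<integral>x. p x \<partial>M) + (\<integral>x. m x \<partial>M))"
    using int[OF p] int[OF m] mass[OF p pn] mass[OF m mn] by (simp add: distrib_left)
  also have "\<dots> = \<kappa> * (\<integral>x. \<bar>f x\<bar> \<partial>M)"
    using integral_abs_eq_pos_neg[OF f] by (simp add: p_def m_def)
  finally show ?thesis .
qed

lemma (in markov_map) integral_abs_image_le:
  "integrable M f \<Longrightarrow> (\<integral>y. \<bar>P f y\<bar> \<partial>N) \<le> (\<integral>x. \<bar>f x\<bar> \<partial>M)"
  using integral_abs_le_if_positive_linear[of M N P 1 f]
  by (simp add: integrable_image image_nonneg image_diff integral_image)

lemma markov_map_funpow_dominates:
  assumes A: "markov_map M M A" and B: "markov_map M M B" and c: "0 \<le> c"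
    and dom: "\<And>f. integrable M f \<Longrightarrow> AE x in M. 0 \<le> f x \<Longrightarrow> AE x in M. c * B f x \<le> A f x"
    and f: "integrable M f" and fn: "AE x in M. 0 \<le> f x"
  shows "AE x in M. c ^ n * (B ^^ n) f x \<le> (A ^^ n) f x"
proof (induction n)
  case 0
  show ?case by simp
next
  case (Suc n)
  interpret A: markov_map M M A by (rule A)
  interpret An: markov_map M M "A ^^ n" by (rule markov_map_funpow[OF A])
  interpret Bn: markov_map M M "B ^^ n" by (rule markov_map_funpow[OF B])
  let ?g = "(B ^^ n) f"
  have g: "integrable M ?g" by (rule Bn.integrable_image[OF f])
  have mono: "AE x in M. A (\<lambda>x. c ^ n * ?g x) x \<le> A ((A ^^ n) f) x"
    using Suc.IH g An.integrable_image[OF f] by (intro A.image_mono) auto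
  have "AE x in M. c * B ?g x \<le> A ?g x" by (rule dom[OF g Bn.image_nonneg[OF f fn]])
  with mono A.image_scale[OF g, of "c ^ n"]
  have "AE x in M. c ^ n * (c * B ?g x) \<le> A ((A ^^ n) f) x"
  proof eventually_elim
    case (elim x)
    have "c ^ n * (c * B ?g x) \<le> c ^ n * A ?g x"
      using elim(3) c by (intro mult_left_mono) auto
    with elim(1,2) show ?case by simp
  qed
  then show ?case by (simp add: ac_simps)
qed

text \<open>A^n = (A^n - c^n B^n) + c^n B^n, where the first summand is positive with mass 1 - c^n.\<close>

lemma integral_abs_funpow_le_if_dominates:
  assumes A: "markov_map M M A" and B: "markov_map M M B" and c: "0 \<le> c"
    and dom: "\<And>f. integrable M f \<Longrightarrow> AE x in M. 0 \<le> f x \<Longrightarrow> AE x in M. c * B f x \<le> A f x"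
    and \<nu>: "integrable M \<nu>"
  shows "(\<integral>x. \<bar>(A ^^ n) \<nu> x\<bar> \<partial>M)
    \<le> c ^ n * (\<integral>x. \<bar>(B ^^ n) \<nu> x\<bar> \<partial>M) + (1 - c ^ n) * (\<integral>x. \<bar>\<nu> x\<bar> \<partial>M)"
proof -
  interpret An: markov_map M M "A ^^ n" by (rule markov_map_funpow[OF A])
  interpret Bn: markov_map M M "B ^^ n" by (rule markov_map_funpow[OF B])
  define R where "R = (\<lambda>f x. (A ^^ n) f x - c ^ n * (B ^^ n) f x)"
  have R_int: "integrable M (R f)" if "integrable M f" for f
    using An.integrable_image[OF that] Bn.integrable_image[OF that] by (auto simp: R_def)
  have "(\<integral>x. \<bar>R \<nu> x\<bar> \<partial>M) \<le> (1 - c ^ n) * (\<integral>x. \<bar>\<nu> x\<bar> \<partial>M)"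
  proof (rule integral_abs_le_if_positive_linear[OF R_int _ _ _ \<nu>])
    fix f :: "_ \<Rightarrow> real" assume f: "integrable M f"
    show "AE x in M. 0 \<le> R f x" if fn: "AE x in M. 0 \<le> f x"
    proof -
      have "AE x in M. c ^ n * (B ^^ n) f x \<le> (A ^^ n) f x"
        by (rule markov_map_funpow_dominates[OF A B c dom f fn])
      then show ?thesis by eventually_elim (simp add: R_def)
    qed
    show "(\<integral>x. R f x \<partial>M) = (1 - c ^ n) * (\<integral>x. f x \<partial>M)"
      using An.integrable_image[OF f] Bn.integrable_image[OF f] An.integral_image[OF f]
        Bn.integral_image[OF f] by (simp add: R_def left_diff_distrib)
    fix g :: "_ \<Rightarrow> real" assume g: "integrable M g"
    show "AE x in M. R (\<lambda>x. f x - g x) x = R f x - R g x"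
      using An.image_diff[OF f g] Bn.image_diff[OF f g]
      by eventually_elim (simp add: R_def right_diff_distrib)
  qed
  moreover have "(\<integral>x. \<bar>(A ^^ n) \<nu> x\<bar> \<partial>M) \<le> (\<integral>x. \<bar>R \<nu> x\<bar> \<partial>M) + c ^ n * (\<integral>x. \<bar>(B ^^ n) \<nu> x\<bar> \<partial>M)"
  proof -
    have "(\<integral>x. \<bar>(A ^^ n) \<nu> x\<bar> \<partial>M) \<le> (\<integral>x. \<bar>R \<nu> x\<bar> + c ^ n * \<bar>(B ^^ n) \<nu> x\<bar> \<partial>M)"
    proof (rule integral_mono)
      show "\<bar>(A ^^ n) \<nu> x\<bar> \<le> \<bar>R \<nu> x\<bar> + c ^ n * \<bar>(B ^^ n) \<nu> x\<bar>" for x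
        using abs_triangle_ineq[of "R \<nu> x" "c ^ n * (B ^^ n) \<nu> x"] c
        by (simp add: R_def abs_mult)
    qed (use R_int[OF \<nu>] An.integrable_image[OF \<nu>] Bn.integrable_image[OF \<nu>] in auto)
    then show ?thesis
      using R_int[OF \<nu>] Bn.integrable_image[OF \<nu>] by simp
  qed
  ultimately show ?thesis by simp
qed

section \<open>Contraction on zero-mean densities\<close>

lemma l1norm_nonneg: "0 \<le> l1norm f"
  unfolding l1norm_def by (rule integral_nonneg_AE) auto

lemma zero_in_V0: "(\<lambda>_. 0) \<in> V0"
  by (simp add: V0_def)

lemma markov_map_image_V0: "markov_map I01 I01 P \<Longrightarrow> \<nu> \<in> V0 \<Longrightarrow> P \<nu> \<in> V0"
  unfolding V0_def by (auto simp: markov_map.integrable_image markov_map.integral_image)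

lemma markov_map_l1norm_image_le: "markov_map I01 I01 P \<Longrightarrow> \<nu> \<in> V0 \<Longrightarrow> l1norm (P \<nu>) \<le> l1norm \<nu>"
  unfolding V0_def l1norm_def by (auto intro: markov_map.integral_abs_image_le)

lemma opnorm_V_le: "(\<And>\<nu>. \<nu> \<in> V0 \<Longrightarrow> l1norm \<nu> \<le> 1 \<Longrightarrow> l1norm (P \<nu>) \<le> s) \<Longrightarrow> opnorm_V P \<le> ereal s"
  unfolding opnorm_V_def by (rule SUP_least) auto

lemma opnorm_V_less_oneE:
  assumes "opnorm_V P < 1"
  obtains r where "0 \<le> r" "r < 1" "\<And>\<nu>. \<nu> \<in> V0 \<Longrightarrow> l1norm \<nu> \<le> 1 \<Longrightarrow> l1norm (P \<nu>) \<le> r"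
proof -
  have bound: "ereal (l1norm (P \<nu>)) \<le> opnorm_V P" if "\<nu> \<in> V0" "l1norm \<nu> \<le> 1" for \<nu>
    unfolding opnorm_V_def using that by (intro SUP_upper) auto
  have "0 \<le> ereal (l1norm (P (\<lambda>_. 0)))" by (simp add: l1norm_nonneg)
  also have "\<dots> \<le> opnorm_V P" by (rule bound[OF zero_in_V0]) (simp add: l1norm_def)
  finally have "0 \<le> opnorm_V P" .
  with assms obtain r where "opnorm_V P = ereal r" "0 \<le> r" "r < 1"
    by (cases "opnorm_V P") auto
  with bound show ?thesis by (intro that) auto
qed

lemma l1norm_le_if_unit_ball_bound:
  assumes P: "markov_map I01 I01 P"
    and bound: "\<And>\<nu>. \<nu> \<in> V0 \<Longrightarrow> l1norm \<nu> \<le> 1 \<Longrightarrow> l1norm (P \<nu>) \<le> s"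
    and \<mu>: "\<mu> \<in> V0"
  shows "l1norm (P \<mu>) \<le> s * l1norm \<mu>"
proof (cases "l1norm \<mu> = 0")
  case True
  then show ?thesis using markov_map_l1norm_image_le[OF P \<mu>] l1norm_nonneg[of "P \<mu>"] by simp
next
  case False
  interpret markov_map I01 I01 P by (rule P)
  define t where "t = l1norm \<mu>"
  have t: "0 < t" using False l1norm_nonneg[of \<mu>] unfolding t_def by linarith
  have \<mu>_int: "integrable I01 \<mu>" using \<mu> by (simp add: V0_def)
  have "(\<lambda>x. (1 / t) * \<mu> x) \<in> V0" "l1norm (\<lambda>x. (1 / t) * \<mu> x) = 1"
    using \<mu> t by (auto simp: V0_def l1norm_def t_def abs_mult)
  then have "l1norm (P (\<lambda>x. (1 / t) * \<mu> x)) \<le> s" using bound by simp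
  moreover have "l1norm (P (\<lambda>x. (1 / t) * \<mu> x)) = l1norm (P \<mu>) / t"
  proof -
    have "AE x in I01. \<bar>P (\<lambda>x. (1 / t) * \<mu> x) x\<bar> = \<bar>P \<mu> x\<bar> / t"
      using image_scale[OF \<mu>_int, of "1 / t"] by eventually_elim (use t in \<open>simp add: abs_mult\<close>)
    then have "l1norm (P (\<lambda>x. (1 / t) * \<mu> x)) = (\<integral>x. \<bar>P \<mu> x\<bar> / t \<partial>I01)"
      unfolding l1norm_def using integrable_image \<mu>_int by (intro integral_cong_AE) auto
    then show ?thesis by (simp add: l1norm_def)
  qed
  ultimately have "l1norm (P \<mu>) / t \<le> s" by simp
  then show ?thesis using t by (simp add: pos_divide_le_eq t_def)
qed

lemma l1norm_funpow_le:
  assumes P: "markov_map I01 I01 P" and s: "0 \<le> s"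
    and contr: "\<And>\<mu>. \<mu> \<in> V0 \<Longrightarrow> l1norm ((P ^^ i) \<mu>) \<le> s * l1norm \<mu>"
    and \<nu>: "\<nu> \<in> V0"
  shows "l1norm ((P ^^ n) \<nu>) \<le> s ^ (n div i) * l1norm \<nu>"
proof -
  have blocks: "l1norm ((P ^^ (i * k)) \<nu>) \<le> s ^ k * l1norm \<nu>" for k
  proof (induction k)
    case 0
    show ?case by simp
  next
    case (Suc k)
    have "l1norm ((P ^^ (i * Suc k)) \<nu>) = l1norm ((P ^^ i) ((P ^^ (i * k)) \<nu>))"
      by (simp add: funpow_add)
    also have "\<dots> \<le> s * l1norm ((P ^^ (i * k)) \<nu>)"
      by (rule contr[OF markov_map_image_V0[OF markov_map_funpow[OF P] \<nu>]])
    also have "\<dots> \<le> s * (s ^ k * l1norm \<nu>)" using Suc.IH s by (rule mult_left_mono)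
    finally show ?case by simp
  qed
  have "P ^^ n = P ^^ (n mod i) \<circ> P ^^ (i * (n div i))"
    by (metis funpow_add mod_mult_div_eq)
  then have "l1norm ((P ^^ n) \<nu>) \<le> l1norm ((P ^^ (i * (n div i))) \<nu>)"
    using markov_map_l1norm_image_le[OF markov_map_funpow[OF P]
        markov_map_image_V0[OF markov_map_funpow[OF P] \<nu>]] by simp
  then show ?thesis using blocks[of "n div i"] by (rule order_trans)
qed

lemma l1norm_funpow_tendsto_zero:
  assumes P: "markov_map I01 I01 P" and s: "0 \<le> s" "s < 1"
    and contr: "\<And>\<mu>. \<mu> \<in> V0 \<Longrightarrow> l1norm ((P ^^ i) \<mu>) \<le> s * l1norm \<mu>"
    and \<nu>: "\<nu> \<in> V0"
  shows "(\<lambda>n. l1norm ((P ^^ n) \<nu>)) \<longlonglongrightarrow> 0"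
proof (rule tendsto_sandwich[OF _ _ tendsto_const])
  show "\<forall>\<^sub>F n in sequentially. 0 \<le> l1norm ((P ^^ n) \<nu>)" by (simp add: l1norm_nonneg)
  show "\<forall>\<^sub>F n in sequentially. l1norm ((P ^^ n) \<nu>) \<le> s ^ (n div i) * l1norm \<nu>"
    using l1norm_funpow_le[OF P s(1) contr \<nu>] by simp
  show "(\<lambda>n. s ^ (n div i) * l1norm \<nu>) \<longlonglongrightarrow> 0"
  proof (cases "i = 0")
    case True
    text \<open>Then the contraction hypothesis reads l1norm \<nu> \<le> s * l1norm \<nu> with s < 1.\<close>
    with contr[OF \<nu>] have "(1 - s) * l1norm \<nu> \<le> 0" by (simp add: algebra_simps)
    with s l1norm_nonneg[of \<nu>] have "l1norm \<nu> = 0"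
      by (simp add: mult_le_0_iff)
    then show ?thesis by simp
  next
    case False
    have "filterlim (\<lambda>n. n div i) at_top sequentially"
      using False by (intro filterlim_at_top_div_const_nat) simp
    with s have "(\<lambda>n. s ^ (n div i)) \<longlonglongrightarrow> 0"
      by (intro filterlim_compose[OF LIMSEQ_power_zero]) auto
    then show ?thesis by (intro tendsto_mult_left_zero)
  qed
qed

lemma l1norm_funpow_le_if_dominates:
  assumes A: "markov_map I01 I01 A" and B: "markov_map I01 I01 B" and c: "0 \<le> c" "c \<le> 1"
    and dom: "\<And>f. integrable I01 f \<Longrightarrow> AE x in I01. 0 \<le> f x \<Longrightarrow> AE x in I01. c * B f x \<le> A f x"
    and rB: "\<And>\<nu>. \<nu> \<in> V0 \<Longrightarrow> l1norm \<nu> \<le> 1 \<Longrightarrow> l1norm ((B ^^ i) \<nu>) \<le> r"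
    and \<nu>: "\<nu> \<in> V0" "l1norm \<nu> \<le> 1"
  shows "l1norm ((A ^^ i) \<nu>) \<le> c ^ i * r + (1 - c ^ i)"
proof -
  have "l1norm ((A ^^ i) \<nu>) \<le> c ^ i * l1norm ((B ^^ i) \<nu>) + (1 - c ^ i) * l1norm \<nu>"
    using integral_abs_funpow_le_if_dominates[OF A B c(1) dom, of \<nu> i] \<nu>
    by (simp add: l1norm_def V0_def)
  also have "\<dots> \<le> c ^ i * r + (1 - c ^ i) * 1"
    using rB[OF \<nu>] \<nu>(2) c by (intro add_mono mult_left_mono) (auto simp: power_le_one)
  finally show ?thesis by simp
qed

lemma opnorm_V_less_one_and_mixing_if_dominates:
  assumes A: "markov_map I01 I01 A" and B: "markov_map I01 I01 B" and c: "0 < c" "c \<le> 1"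
    and dom: "\<And>f. integrable I01 f \<Longrightarrow> AE x in I01. 0 \<le> f x \<Longrightarrow> AE x in I01. c * B f x \<le> A f x"
    and B_contracts: "opnorm_V (B ^^ i) < 1"
  shows "opnorm_V (A ^^ i) < 1 \<and> (\<forall>\<nu>\<in>V0. (\<lambda>n. l1norm ((A ^^ n) \<nu>)) \<longlonglongrightarrow> 0)"
proof -
  obtain r where r: "0 \<le> r" "r < 1"
    and rB: "\<And>\<nu>. \<nu> \<in> V0 \<Longrightarrow> l1norm \<nu> \<le> 1 \<Longrightarrow> l1norm ((B ^^ i) \<nu>) \<le> r"
    using opnorm_V_less_oneE[OF B_contracts] by blast
  define s where "s = c ^ i * r + (1 - c ^ i)"
  have ci: "0 < c ^ i" "c ^ i \<le> 1" using c by (auto simp: power_le_one)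
  have s: "0 \<le> s" "s < 1"
    unfolding s_def using ci r by (auto intro: add_nonneg_nonneg simp: mult_strict_left_mono)
  have sA: "\<And>\<nu>. \<nu> \<in> V0 \<Longrightarrow> l1norm \<nu> \<le> 1 \<Longrightarrow> l1norm ((A ^^ i) \<nu>) \<le> s"
    unfolding s_def using l1norm_funpow_le_if_dominates[OF A B less_imp_le[OF c(1)] c(2) dom rB] .
  have "opnorm_V (A ^^ i) \<le> ereal s" by (rule opnorm_V_le[OF sA])
  with s have "opnorm_V (A ^^ i) < 1" by (simp add: le_less_trans)
  moreover have "(\<lambda>n. l1norm ((A ^^ n) \<nu>)) \<longlonglongrightarrow> 0" if "\<nu> \<in> V0" for \<nu>
    using l1norm_funpow_tendsto_zero[OF A s l1norm_le_if_unit_ball_bound[OF markov_map_funpow[OF A] sA] that] .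
  ultimately show ?thesis by blast
qed

section \<open>Pushforward densities\<close>

lemma finite_measure_I01: "finite_measure I01"
  by (rule finite_measure_lebesgue_on) simp

lemma integrable_mult_bounded:
  fixes f g :: "'a \<Rightarrow> real"
  assumes f: "integrable M f" and g: "g \<in> borel_measurable M" and bound: "\<And>x. \<bar>g x\<bar> \<le> B"
  shows "integrable M (\<lambda>x. f x * g x)"
proof (rule Bochner_Integration.integrable_bound[of M "\<lambda>x. B * \<bar>f x\<bar>"])
  show "AE x in M. norm (f x * g x) \<le> norm (B * \<bar>f x\<bar>)"
  proof (rule AE_I2)
    fix x
    have "\<bar>f x * g x\<bar> \<le> \<bar>f x\<bar> * B" using bound[of x] by (simp add: abs_mult mult_left_mono)
    then show "norm (f x * g x) \<le> norm (B * \<bar>f x\<bar>)" by (simp add: mult.commute)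
  qed
qed (use f g in auto)

locale nonsingular_map =
  fixes M :: "'a measure" and S :: "'a \<Rightarrow> real"
  assumes measurable_map: "S \<in> measurable M I01"
    and null_vimage: "\<And>A. A \<in> sets I01 \<Longrightarrow> emeasure I01 A = 0 \<Longrightarrow> emeasure M (S -` A \<inter> space M) = 0"
begin

lemma integral_RN_deriv_distr_density_mult:
  fixes h :: "'a \<Rightarrow> real" and g :: "real \<Rightarrow> real"
  assumes h: "integrable M h" and g: "g \<in> borel_measurable I01" and gb: "\<And>y. \<bar>g y\<bar> \<le> B"
  defines "\<mu> \<equiv> distr (density M (\<lambda>x. ennreal (h x))) I01 S"
  shows "integrable I01 (\<lambda>y. enn2real (RN_deriv I01 \<mu> y) * g y)"
    and "(\<integral>y. enn2real (RN_deriv I01 \<mu> y) * g y \<partial>I01) = (\<integral>x. max (h x) 0 * g (S x) \<partial>M)"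
proof -
  interpret I01: finite_measure I01 by (rule finite_measure_I01)
  have [measurable]: "h \<in> borel_measurable M" using h by auto
  have S_dens: "S \<in> measurable (density M (\<lambda>x. ennreal (h x))) I01" using measurable_map by simp
  have dens: "density M (\<lambda>x. ennreal (h x)) = density M (\<lambda>x. ennreal (max (h x) 0))"
    by (rule density_cong) (auto intro!: AE_I2 simp: max_def ennreal_neg)
  have sets_\<mu>: "sets \<mu> = sets I01" unfolding \<mu>_def by simp
  interpret \<mu>: finite_measure \<mu>
  proof
    have "S -` {0..1} \<inter> space M = space M" using measurable_space[OF measurable_map] by auto
    then have "emeasure \<mu> (space \<mu>) = (\<integral>\<^sup>+x. ennreal (max (h x) 0) \<partial>M)"
      unfolding \<mu>_def dens using measurable_map
      by (subst emeasure_distr) (auto simp: emeasure_density intro!: nn_integral_cong)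
    also have "\<dots> < \<infinity>" using h by (simp add: nn_integral_eq_integral)
    finally show "emeasure \<mu> (space \<mu>) \<noteq> \<infinity>" by simp
  qed
  have ac: "absolutely_continuous I01 \<mu>"
    unfolding absolutely_continuous_def
  proof
    fix A assume A: "A \<in> null_sets I01"
    then have "S -` A \<inter> space M \<in> null_sets M"
      using null_vimage[of A] measurable_sets[OF measurable_map, of A] by (intro null_setsI) auto
    moreover have "absolutely_continuous M (density M (\<lambda>x. ennreal (h x)))"
      by (rule absolutely_continuousI_density) measurable
    ultimately have "emeasure (density M (\<lambda>x. ennreal (h x))) (S -` A \<inter> space M) = 0"
      unfolding absolutely_continuous_def by auto
    then show "A \<in> null_sets \<mu>"
      using A emeasure_distr[OF S_dens, of A] by (intro null_setsI) (auto simp: \<mu>_def)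
  qed
  have g_\<mu>: "g \<in> borel_measurable \<mu>" using g by (simp add: measurable_cong_sets[OF sets_\<mu> refl])
  have "integrable \<mu> g"
    by (rule \<mu>.integrable_const_bound[where B=B, OF AE_I2 g_\<mu>]) (simp add: gb)
  then show "integrable I01 (\<lambda>y. enn2real (RN_deriv I01 \<mu> y) * g y)"
    using I01.RN_deriv_integrable[OF \<mu>.sigma_finite_measure_axioms ac sets_\<mu> g] by blast
  have "(\<integral>y. enn2real (RN_deriv I01 \<mu> y) * g y \<partial>I01) = integral\<^sup>L \<mu> g"
    by (rule I01.RN_deriv_integral[OF \<mu>.sigma_finite_measure_axioms ac sets_\<mu> g, symmetric])
  also have "\<dots> = (\<integral>x. g (S x) \<partial>density M (\<lambda>x. ennreal (max (h x) 0)))"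
    unfolding \<mu>_def dens using measurable_map g by (intro integral_distr) auto
  also have "\<dots> = (\<integral>x. max (h x) 0 * g (S x) \<partial>M)"
    using measurable_map g by (subst integral_density) (auto intro: measurable_compose)
  finally show "(\<integral>y. enn2real (RN_deriv I01 \<mu> y) * g y \<partial>I01) = (\<integral>x. max (h x) 0 * g (S x) \<partial>M)" .
qed

lemma integral_push_dens_mult:
  fixes f :: "'a \<Rightarrow> real" and g :: "real \<Rightarrow> real"
  assumes f: "integrable M f" and g: "g \<in> borel_measurable I01" and gb: "\<And>y. \<bar>g y\<bar> \<le> B"
  shows "integrable I01 (\<lambda>y. push_dens M I01 S f y * g y)"
    and "(\<integral>y. push_dens M I01 S f y * g y \<partial>I01) = (\<integral>x. f x * g (S x) \<partial>M)"
proof -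
  note pos = integral_RN_deriv_distr_density_mult[OF f g gb]
    and neg = integral_RN_deriv_distr_density_mult[OF integrable_minus[OF f] g gb]
  have split: "push_dens M I01 S f y * g y =
      enn2real (RN_deriv I01 (distr (density M (\<lambda>x. ennreal (f x))) I01 S) y) * g y
    - enn2real (RN_deriv I01 (distr (density M (\<lambda>x. ennreal (- f x))) I01 S) y) * g y" for y
    unfolding push_dens_def by (simp add: left_diff_distrib)
  show "integrable I01 (\<lambda>y. push_dens M I01 S f y * g y)"
    unfolding split using pos neg by auto
  have gS: "(\<lambda>x. g (S x)) \<in> borel_measurable M" using g measurable_map by measurable
  have int_part: "integrable M (\<lambda>x. max (u x) 0 * g (S x))" if "integrable M u" for u
    using integrable_mult_bounded[OF _ gS gb] that by auto
  have "(\<integral>y. push_dens M I01 S f y * g y \<partial>I01) =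
     (\<integral>x. max (f x) 0 * g (S x) \<partial>M) - (\<integral>x. max (- f x) 0 * g (S x) \<partial>M)"
    unfolding split using pos neg by (subst Bochner_Integration.integral_diff) auto
  also have "\<dots> = (\<integral>x. max (f x) 0 * g (S x) - max (- f x) 0 * g (S x) \<partial>M)"
    using int_part[OF f] int_part[OF integrable_minus[OF f]]
    by (subst Bochner_Integration.integral_diff) auto
  also have "\<dots> = (\<integral>x. f x * g (S x) \<partial>M)"
    by (rule Bochner_Integration.integral_cong) (auto simp: max_def algebra_simps)
  finally show "(\<integral>y. push_dens M I01 S f y * g y \<partial>I01) = (\<integral>x. f x * g (S x) \<partial>M)" .
qed

lemma integrable_push_dens: "integrable M f \<Longrightarrow> integrable I01 (push_dens M I01 S f)"
  using integral_push_dens_mult(1)[of f "\<lambda>_. 1" 1] by simp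

lemma integral_push_dens: "integrable M f \<Longrightarrow> (\<integral>y. push_dens M I01 S f y \<partial>I01) = (\<integral>x. f x \<partial>M)"
  using integral_push_dens_mult(2)[of f "\<lambda>_. 1" 1] by simp

lemma set_integral_push_dens:
  "integrable M f \<Longrightarrow> A \<in> sets I01 \<Longrightarrow>
    (\<integral>y\<in>A. push_dens M I01 S f y \<partial>I01) = (\<integral>x. f x * indicator A (S x) \<partial>M)"
  using integral_push_dens_mult(2)[of f "indicator A" 1]
  by (simp add: set_lebesgue_integral_def mult.commute)

lemma push_dens_nonneg:
  assumes f: "integrable M f" and nonneg: "AE x in M. 0 \<le> f x"
  shows "AE y in I01. 0 \<le> push_dens M I01 S f y"
proof -
  interpret I01: finite_measure I01 by (rule finite_measure_I01)
  have "AE y in I01. push_dens M I01 S f y \<in> {0..}"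
  proof (rule I01.averaging_theorem[OF integrable_push_dens[OF f]])
    fix A assume "A \<in> sets I01"
    moreover have "0 \<le> (\<integral>x. f x * indicator A (S x) \<partial>M)"
      using nonneg by (intro integral_nonneg_AE) (auto simp: indicator_def)
    ultimately show "(1 / measure I01 A) *\<^sub>R (\<integral>y\<in>A. push_dens M I01 S f y \<partial>I01) \<in> {0..}"
      using set_integral_push_dens[OF f] by simp
  qed simp
  then show ?thesis by simp
qed

lemma push_dens_linear:
  assumes f: "integrable M f" and g: "integrable M g"
  shows "AE y in I01. push_dens M I01 S (\<lambda>x. a * f x + b * g x) y
    = a * push_dens M I01 S f y + b * push_dens M I01 S g y"
proof (rule density_unique_real)
  have fg: "integrable M (\<lambda>x. a * f x + b * g x)" using f g by auto
  then show "integrable I01 (push_dens M I01 S (\<lambda>x. a * f x + b * g x))"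
    by (rule integrable_push_dens)
  show "integrable I01 (\<lambda>y. a * push_dens M I01 S f y + b * push_dens M I01 S g y)"
    using integrable_push_dens[OF f] integrable_push_dens[OF g] by auto
  fix A assume A: "A \<in> sets I01"
  have int_A: "integrable M (\<lambda>x. u x * indicator A (S x))" if "integrable M u" for u :: "'a \<Rightarrow> real"
    using measurable_map A by (intro integrable_mult_bounded[OF that, of _ 1]) auto
  have si: "set_integrable I01 A (push_dens M I01 S u)" if "integrable M u" for u
    unfolding set_integrable_def using integrable_mult_indicator[OF A integrable_push_dens[OF that]]
    by simp
  have "(\<integral>y\<in>A. push_dens M I01 S (\<lambda>x. a * f x + b * g x) y \<partial>I01)
    = a * (\<integral>x. f x * indicator A (S x) \<partial>M) + b * (\<integral>x. g x * indicator A (S x) \<partial>M)"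
    using set_integral_push_dens[OF fg A] int_A[OF f] int_A[OF g] by (simp add: distrib_right mult.assoc)
  also have "\<dots> = (\<integral>y\<in>A. a * push_dens M I01 S f y + b * push_dens M I01 S g y \<partial>I01)"
    using set_integral_push_dens[OF f A] set_integral_push_dens[OF g A] si[OF f] si[OF g] by simp
  finally show "(\<integral>y\<in>A. push_dens M I01 S (\<lambda>x. a * f x + b * g x) y \<partial>I01)
    = (\<integral>y\<in>A. a * push_dens M I01 S f y + b * push_dens M I01 S g y \<partial>I01)" .
qed

lemma push_dens_cong:
  assumes "f \<in> borel_measurable M" "g \<in> borel_measurable M" "AE x in M. f x = g x"
  shows "push_dens M I01 S f = push_dens M I01 S g"
proof -
  have "density M (\<lambda>x. ennreal (f x)) = density M (\<lambda>x. ennreal (g x))"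
    and "density M (\<lambda>x. ennreal (- f x)) = density M (\<lambda>x. ennreal (- g x))"
    using assms by (auto intro!: density_cong)
  then show ?thesis unfolding push_dens_def by simp
qed

lemma markov_map_push_dens: "markov_map M I01 (push_dens M I01 S)"
proof
  fix f g :: "'a \<Rightarrow> real" and a b :: real
  assume f: "integrable M f"
  show "integrable I01 (push_dens M I01 S f)" by (rule integrable_push_dens[OF f])
  show "(\<integral>y. push_dens M I01 S f y \<partial>I01) = (\<integral>x. f x \<partial>M)" by (rule integral_push_dens[OF f])
  show "AE y in I01. 0 \<le> push_dens M I01 S f y" if "AE x in M. 0 \<le> f x"
    by (rule push_dens_nonneg[OF f that])
  assume g: "integrable M g"
  show "AE y in I01. push_dens M I01 S f y = push_dens M I01 S g y" if "AE x in M. f x = g x"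
    using push_dens_cong[OF _ _ that] f g by auto
  show "AE y in I01. push_dens M I01 S (\<lambda>x. a * f x + b * g x) y
    = a * push_dens M I01 S f y + b * push_dens M I01 S g y"
    by (rule push_dens_linear[OF f g])
qed

end

lemma markov_map_transfer_op:
  assumes "nonsingular T"
  shows "markov_map I01 I01 (transfer_op T)"
proof -
  interpret nonsingular_map I01 T
    using assms unfolding nonsingular_def by unfold_locales auto
  show ?thesis unfolding transfer_op_def by (rule markov_map_push_dens)
qed

section \<open>The noise operator\<close>

lemma rho_borel [measurable]: "rho \<xi> \<in> borel_measurable borel"
  unfolding rho_def by measurable

lemma rho_diff_eq_indicator_around_y: "rho \<xi> (y - x) = (1 / \<xi>) * indicator {y - \<xi>/2 .. y + \<xi>/2} x"
  unfolding rho_def by (auto simp: indicator_def)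

lemma rho_diff_eq_indicator_around_x: "rho \<xi> (y - x) = (1 / \<xi>) * indicator {x - \<xi>/2 .. x + \<xi>/2} y"
  unfolding rho_def by (auto simp: indicator_def)

lemma rho_nonneg: "0 < \<xi> \<Longrightarrow> 0 \<le> rho \<xi> t"
  by (simp add: rho_def)

lemma rho_mono_width: "0 < \<xi> \<Longrightarrow> \<xi> < \<xi>' \<Longrightarrow> (\<xi> / \<xi>') * rho \<xi> t \<le> rho \<xi>' t"
  unfolding rho_def by (auto simp: field_simps)

lemma integrable_rho_diff_mult:
  "integrable lebesgue h \<Longrightarrow> integrable lebesgue (\<lambda>x. rho \<xi> (y - x) * h x)"
  using integrable_mult_indicator[of "{y - \<xi>/2 .. y + \<xi>/2}" lebesgue h]
  by (simp add: rho_diff_eq_indicator_around_y mult.assoc)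

lemma conv_rho_AE_cong:
  assumes "integrable lebesgue h" "integrable lebesgue h'" "AE x in lebesgue. h x = h' x"
  shows "conv (rho \<xi>) h = conv (rho \<xi>) h'"
  unfolding conv_def using assms integrable_rho_diff_mult
  by (intro ext integral_cong_AE) auto

lemma conv_rho_linear:
  assumes h: "integrable lebesgue h" and g: "integrable lebesgue g"
  shows "conv (rho \<xi>) (\<lambda>x. a * h x + b * g x) = (\<lambda>y. a * conv (rho \<xi>) h y + b * conv (rho \<xi>) g y)"
proof
  fix y
  have "conv (rho \<xi>) (\<lambda>x. a * h x + b * g x) y
      = (\<integral>x. a * (rho \<xi> (y - x) * h x) + b * (rho \<xi> (y - x) * g x) \<partial>lebesgue)"
    unfolding conv_def by (simp add: algebra_simps)
  also have "\<dots> = a * conv (rho \<xi>) h y + b * conv (rho \<xi>) g y"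
    unfolding conv_def using integrable_rho_diff_mult[OF h] integrable_rho_diff_mult[OF g]
    by (subst Bochner_Integration.integral_add) auto
  finally show "conv (rho \<xi>) (\<lambda>x. a * h x + b * g x) y = a * conv (rho \<xi>) h y + b * conv (rho \<xi>) g y" .
qed

lemma conv_rho_nonneg: "0 < \<xi> \<Longrightarrow> AE x in lebesgue. 0 \<le> h x \<Longrightarrow> 0 \<le> conv (rho \<xi>) h y"
  unfolding conv_def by (intro integral_nonneg_AE) (auto elim!: eventually_mono intro: mult_nonneg_nonneg rho_nonneg)

lemma conv_rho_mono_width:
  assumes \<xi>: "0 < \<xi>" "\<xi> < \<xi>'" and h: "integrable lebesgue h" and nonneg: "AE x in lebesgue. 0 \<le> h x"
  shows "(\<xi> / \<xi>') * conv (rho \<xi>) h y \<le> conv (rho \<xi>') h y"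
proof -
  have "(\<xi> / \<xi>') * conv (rho \<xi>) h y = (\<integral>x. ((\<xi> / \<xi>') * rho \<xi> (y - x)) * h x \<partial>lebesgue)"
    unfolding conv_def by (simp add: mult.assoc)
  also have "\<dots> \<le> conv (rho \<xi>') h y"
    unfolding conv_def
  proof (rule integral_mono_AE)
    show "AE x in lebesgue. (\<xi> / \<xi>') * rho \<xi> (y - x) * h x \<le> rho \<xi>' (y - x) * h x"
      using nonneg
    proof eventually_elim
      case (elim x)
      show ?case using mult_right_mono[OF rho_mono_width[OF \<xi>, of "y - x"] elim] by simp
    qed
  qed (use integrable_rho_diff_mult[OF h] in \<open>auto simp: mult.assoc\<close>)
  finally show ?thesis .
qed

text \<open>Fubini: each point mass h x is spread uniformly over an interval of length \<xi>.\<close>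

lemma conv_rho_lborel:
  fixes h :: "real \<Rightarrow> real"
  assumes \<xi>: "0 < \<xi>" and h: "integrable lborel h"
  shows "integrable lborel (conv (rho \<xi>) h)" and "(\<integral>y. conv (rho \<xi>) h y \<partial>lborel) = (\<integral>x. h x \<partial>lborel)"
proof -
  have [measurable]: "h \<in> borel_measurable borel" using h by auto
  define F where "F = (\<lambda>y x. rho \<xi> (y - x) * h x)"
  have [measurable]: "case_prod F \<in> borel_measurable (lborel \<Otimes>\<^sub>M lborel)"
    unfolding F_def by measurable
  have conv_eq: "conv (rho \<xi>) h = (\<lambda>y. \<integral>x. F y x \<partial>lborel)"
    unfolding conv_def F_def by (intro ext integral_completion) measurable
  have F_y: "F y x = (h x / \<xi>) * indicator {x - \<xi>/2 .. x + \<xi>/2} y" for x y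
    unfolding F_def rho_diff_eq_indicator_around_x by simp
  have "(\<integral>\<^sup>+p. ennreal (norm (case_prod F p)) \<partial>(lborel \<Otimes>\<^sub>M lborel))
      = (\<integral>\<^sup>+x. (\<integral>\<^sup>+y. ennreal (\<bar>h x\<bar> / \<xi>) * indicator {x - \<xi>/2 .. x + \<xi>/2} y \<partial>lborel) \<partial>lborel)"
    using \<xi> by (subst lborel_pair.nn_integral_snd[symmetric])
      (auto simp: F_y abs_mult indicator_def intro!: nn_integral_cong)
  also have "\<dots> = (\<integral>\<^sup>+x. ennreal (norm (h x)) \<partial>lborel)"
    using \<xi> by (intro nn_integral_cong, subst nn_integral_cmult_indicator) (auto simp: ennreal_mult[symmetric])
  also have "\<dots> < \<infinity>" using h by (simp add: integrable_iff_bounded)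
  finally have F_int: "integrable (lborel \<Otimes>\<^sub>M lborel) (case_prod F)"
    by (simp add: integrable_iff_bounded)
  show "integrable lborel (conv (rho \<xi>) h)"
    unfolding conv_eq using lborel_pair.integrable_fst'[OF F_int] by simp
  have "(\<integral>y. conv (rho \<xi>) h y \<partial>lborel) = (\<integral>x. (\<integral>y. F y x \<partial>lborel) \<partial>lborel)"
    unfolding conv_eq by (rule lborel_pair.Fubini_integral[OF F_int, symmetric])
  also have "\<dots> = (\<integral>x. h x \<partial>lborel)"
    using \<xi> by (simp add: F_y)
  finally show "(\<integral>y. conv (rho \<xi>) h y \<partial>lborel) = (\<integral>x. h x \<partial>lborel)" .
qed

lemma conv_rho_lebesgue:
  fixes h :: "real \<Rightarrow> real"
  assumes \<xi>: "0 < \<xi>" and h: "integrable lebesgue h"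
  shows "integrable lebesgue (conv (rho \<xi>) h)"
    and "(\<integral>y. conv (rho \<xi>) h y \<partial>lebesgue) = (\<integral>x. h x \<partial>lebesgue)"
proof -
  obtain h' where [measurable]: "h' \<in> borel_measurable lborel" and ae_lborel: "AE x in lborel. h x = h' x"
    using completion_ex_borel_measurable_real[of h lborel] h by auto
  have ae: "AE x in lebesgue. h x = h' x" by (rule AE_completion[OF ae_lborel])
  have h'_leb: "integrable lebesgue h'"
    using ae h by (intro integrable_cong_AE_imp[OF h _ ae]) (auto intro: measurable_completion)
  then have h'_lborel: "integrable lborel h'" by (simp add: integrable_completion)
  have conv_eq: "conv (rho \<xi>) h = conv (rho \<xi>) h'" by (rule conv_rho_AE_cong[OF h h'_leb ae])
  note lborel = conv_rho_lborel[OF \<xi> h'_lborel]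
  have meas: "conv (rho \<xi>) h' \<in> borel_measurable lborel" using lborel(1) by auto
  show "integrable lebesgue (conv (rho \<xi>) h)"
    unfolding conv_eq using lborel(1) integrable_completion[OF meas] by simp
  have "(\<integral>y. conv (rho \<xi>) h' y \<partial>lebesgue) = (\<integral>x. h' x \<partial>lebesgue)"
    using lborel(2) meas by (simp add: integral_completion)
  also have "\<dots> = (\<integral>x. h x \<partial>lebesgue)"
    using ae h h'_leb by (intro integral_cong_AE) auto
  finally show "(\<integral>y. conv (rho \<xi>) h y \<partial>lebesgue) = (\<integral>x. h x \<partial>lebesgue)"
    unfolding conv_eq .
qed

lemma ext0_eq_indicator: "ext0 f = (\<lambda>x. indicator {0..1} x *\<^sub>R f x)"
  by (auto simp: ext0_def fun_eq_iff)

lemma integrable_ext0: "integrable I01 f \<Longrightarrow> integrable lebesgue (ext0 f)"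
  unfolding ext0_eq_indicator by (simp add: integrable_restrict_space)

lemma integral_ext0: "(\<integral>x. ext0 f x \<partial>lebesgue) = (\<integral>x. f x \<partial>I01)"
  unfolding ext0_eq_indicator by (simp add: integral_restrict_space)

lemma ext0_AE_cong:
  assumes "AE x in I01. f x = g x"
  shows "AE x in lebesgue. ext0 f x = ext0 g x"
proof -
  have "AE x in lebesgue. x \<in> {0..1} \<longrightarrow> f x = g x"
    using assms by (subst (asm) AE_restrict_space_iff) auto
  then show ?thesis by eventually_elim (auto simp: ext0_def)
qed

lemma ext0_AE_nonneg:
  assumes "AE x in I01. 0 \<le> f x"
  shows "AE x in lebesgue. 0 \<le> ext0 f x"
proof -
  have "AE x in lebesgue. x \<in> {0..1} \<longrightarrow> 0 \<le> f x"
    using assms by (subst (asm) AE_restrict_space_iff) auto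
  then show ?thesis by eventually_elim (auto simp: ext0_def)
qed

lemma ext0_linear: "ext0 (\<lambda>x. a * f x + b * g x) = (\<lambda>x. a * ext0 f x + b * ext0 g x)"
  by (auto simp: ext0_def fun_eq_iff)

lemma markov_map_conv_rho_ext0:
  assumes \<xi>: "0 < \<xi>"
  shows "markov_map I01 lebesgue (\<lambda>f. conv (rho \<xi>) (ext0 f))"
proof
  fix f g :: "real \<Rightarrow> real" and a b :: real
  assume f: "integrable I01 f"
  note ext_f = integrable_ext0[OF f]
  show "integrable lebesgue (conv (rho \<xi>) (ext0 f))" by (rule conv_rho_lebesgue(1)[OF \<xi> ext_f])
  show "(\<integral>y. conv (rho \<xi>) (ext0 f) y \<partial>lebesgue) = (\<integral>x. f x \<partial>I01)"
    using conv_rho_lebesgue(2)[OF \<xi> ext_f] by (simp add: integral_ext0)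
  show "AE y in lebesgue. 0 \<le> conv (rho \<xi>) (ext0 f) y" if "AE x in I01. 0 \<le> f x"
    using conv_rho_nonneg[OF \<xi> ext0_AE_nonneg[OF that]] by simp
  assume g: "integrable I01 g"
  note ext_g = integrable_ext0[OF g]
  show "AE y in lebesgue. conv (rho \<xi>) (ext0 f) y = conv (rho \<xi>) (ext0 g) y" if "AE x in I01. f x = g x"
    using conv_rho_AE_cong[OF ext_f ext_g ext0_AE_cong[OF that]] by simp
  show "AE y in lebesgue. conv (rho \<xi>) (ext0 (\<lambda>x. a * f x + b * g x)) y
    = a * conv (rho \<xi>) (ext0 f) y + b * conv (rho \<xi>) (ext0 g) y"
    by (simp add: ext0_linear conv_rho_linear[OF ext_f ext_g])
qed

lemma fold_pi_eq_round: "fold_pi x = \<bar>x - 2 * of_int (round (x / 2))\<bar>"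
  unfolding fold_pi_def
proof (rule cInf_eq_minimum)
  fix y assume "y \<in> range (\<lambda>i::int. \<bar>x - 2 * of_int i\<bar>)"
  then obtain i :: int where y: "y = \<bar>x - 2 * of_int i\<bar>" by auto
  have "\<bar>x / 2 - of_int (round (x / 2))\<bar> \<le> \<bar>x / 2 - of_int i\<bar>" by (rule round_diff_minimal)
  then show "\<bar>x - 2 * of_int (round (x / 2))\<bar> \<le> y" unfolding y by linarith
qed auto

lemma fold_pi_in_unit_interval: "fold_pi x \<in> {0..1}"
  using of_int_round_ge[of "x / 2"] of_int_round_le[of "x / 2"] unfolding fold_pi_eq_round by auto

lemma borel_measurable_fold_pi [measurable]: "fold_pi \<in> borel_measurable borel"
proof -
  have "fold_pi = (\<lambda>x. \<bar>x - 2 * real_of_int \<lfloor>x / 2 + 1/2\<rfloor>\<bar>)"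
    by (auto simp: fun_eq_iff fold_pi_eq_round round_def)
  also have "\<dots> \<in> borel_measurable borel" by measurable
  finally show ?thesis .
qed

text \<open>The preimage of C under the fold lies in the countable union of the translates
  C + 2i and reflections 2i - C.\<close>

lemma negligible_vimage_fold_pi:
  assumes C: "negligible C"
  shows "negligible (fold_pi -` C)"
proof -
  let ?F = "range (\<lambda>i::int. (\<lambda>a. a + 2 * of_int i) ` C \<union> (\<lambda>a. 2 * of_int i - a) ` C)"
  have "fold_pi -` C \<subseteq> \<Union>?F"
  proof
    fix x assume "x \<in> fold_pi -` C"
    then have a: "\<bar>x - 2 * of_int (round (x / 2))\<bar> \<in> C" by (simp add: fold_pi_eq_round)
    define i where "i = round (x / 2)"
    have "x \<in> (\<lambda>a. a + 2 * of_int i) ` C \<union> (\<lambda>a. 2 * of_int i - a) ` C"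
    proof (cases "0 \<le> x - 2 * of_int i")
      case True
      then have "x = \<bar>x - 2 * of_int i\<bar> + 2 * of_int i" by simp
      then show ?thesis using a unfolding i_def by (metis UnI1 image_eqI)
    next
      case False
      then have "x = 2 * of_int i - \<bar>x - 2 * of_int i\<bar>" by simp
      then show ?thesis using a unfolding i_def by (metis UnI2 image_eqI)
    qed
    then show "x \<in> \<Union>?F" by blast
  qed
  moreover have "negligible (\<Union>?F)"
  proof (rule negligible_countable_Union)
    fix S assume "S \<in> ?F"
    then obtain i :: int where S: "S = (\<lambda>a. a + 2 * of_int i) ` C \<union> (\<lambda>a. 2 * of_int i - a) ` C"
      by auto
    have "negligible ((\<lambda>a. a + 2 * of_int i) ` C)" "negligible ((\<lambda>a. 2 * of_int i - a) ` C)"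
      by (auto intro!: negligible_differentiable_image_negligible[OF _ C] derivative_intros)
    then show "negligible S" unfolding S by simp
  qed simp
  ultimately show ?thesis using negligible_subset by blast
qed

lemma fold_pi_measurable: "fold_pi \<in> measurable lebesgue I01"
proof (rule measurable_restrict_space2)
  show "fold_pi \<in> space lebesgue \<rightarrow> {0..1}" using fold_pi_in_unit_interval by auto
  show "fold_pi \<in> lebesgue \<rightarrow>\<^sub>M lebesgue"
  proof (rule measurableI)
    fix B :: "real set" assume "B \<in> sets lebesgue"
    then obtain S N N' :: "real set"
      where B: "B = S \<union> N" "N \<subseteq> N'" "N' \<in> null_sets lborel" "S \<in> sets lborel"
      by (auto elim: sets_completionE)
    have "negligible N'" using null_sets_completionI[OF B(3)] by (simp add: negligible_iff_null_sets)
    then have "negligible N" using B(2) by (rule negligible_subset)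
    then have "fold_pi -` N \<in> sets lebesgue" by (intro negligible_imp_sets negligible_vimage_fold_pi)
    moreover have "fold_pi -` S \<in> sets lebesgue"
      using measurable_sets[OF borel_measurable_fold_pi B(4)[simplified]]
      by (auto intro: sets_completionI_sets)
    ultimately show "fold_pi -` B \<inter> space lebesgue \<in> sets lebesgue" unfolding B(1) by auto
  qed simp
qed

lemma nonsingular_map_fold_pi: "nonsingular_map lebesgue fold_pi"
proof
  show "fold_pi \<in> lebesgue \<rightarrow>\<^sub>M I01" by (rule fold_pi_measurable)
  fix A assume A: "A \<in> sets I01" and null: "emeasure I01 A = 0"
  have A_leb: "A \<in> sets lebesgue" and "A \<subseteq> {0..1}"
    using A by (auto simp: sets_restrict_space_iff)
  with null have "emeasure lebesgue A = 0" by (simp add: emeasure_restrict_space Int_absorb2)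
  then have "negligible (fold_pi -` A)"
    using A_leb by (intro negligible_vimage_fold_pi) (simp add: negligible_iff_emeasure0)
  then show "emeasure lebesgue (fold_pi -` A \<inter> space lebesgue) = 0"
    by (simp add: negligible_iff_null_sets null_sets_def)
qed

lemma noise_op_eq_comp: "noise_op \<xi> = push_dens lebesgue I01 fold_pi \<circ> (\<lambda>f. conv (rho \<xi>) (ext0 f))"
  by (simp add: fun_eq_iff noise_op_def)

lemma markov_map_noise_op: "0 < \<xi> \<Longrightarrow> markov_map I01 I01 (noise_op \<xi>)"
  unfolding noise_op_eq_comp
  by (rule markov_map_comp[OF nonsingular_map.markov_map_push_dens[OF nonsingular_map_fold_pi]
        markov_map_conv_rho_ext0])

lemma noise_op_mono_width:
  assumes \<xi>: "0 < \<xi>" "\<xi> < \<xi>'" and f: "integrable I01 f" and nonneg: "AE x in I01. 0 \<le> f x"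
  shows "AE y in I01. (\<xi> / \<xi>') * noise_op \<xi> f y \<le> noise_op \<xi>' f y"
proof -
  interpret fold: markov_map lebesgue I01 "push_dens lebesgue I01 fold_pi"
    by (rule nonsingular_map.markov_map_push_dens[OF nonsingular_map_fold_pi])
  define u where "u = conv (rho \<xi>) (ext0 f)"
  define u' where "u' = conv (rho \<xi>') (ext0 f)"
  have u: "integrable lebesgue u" and u': "integrable lebesgue u'"
    using \<xi> by (auto simp: u_def u'_def intro: conv_rho_lebesgue integrable_ext0[OF f])
  have "AE y in I01. push_dens lebesgue I01 fold_pi (\<lambda>x. (\<xi> / \<xi>') * u x) y \<le> push_dens lebesgue I01 fold_pi u' y"
    using u u' conv_rho_mono_width[OF \<xi> integrable_ext0[OF f] ext0_AE_nonneg[OF nonneg]]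
    by (intro fold.image_mono) (auto simp: u_def u'_def)
  with fold.image_scale[OF u, of "\<xi> / \<xi>'"] show ?thesis
    by eventually_elim (simp add: noise_op_def u_def u'_def)
qed

theorem corollary58:
  fixes T :: "real \<Rightarrow> real" and \<xi> :: real and i :: nat
  assumes "nonsingular T"
    and "\<xi> > 0"
    and "opnorm_V ((noise_op \<xi> \<circ> transfer_op T) ^^ i) < 1"
  shows "\<forall>\<xi>'>\<xi>. opnorm_V ((noise_op \<xi>' \<circ> transfer_op T) ^^ i) < 1 \<and> mixing T \<xi>'"
proof (intro allI impI)
  fix \<xi>' :: real assume wider: "\<xi>' > \<xi>"
  have L: "markov_map I01 I01 (transfer_op T)" by (rule markov_map_transfer_op[OF assms(1)])
  have noisy_L: "markov_map I01 I01 (noise_op \<eta> \<circ> transfer_op T)" if "0 < \<eta>" for \<eta>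
    by (rule markov_map_comp[OF markov_map_noise_op[OF that] L])
  have dom: "AE x in I01. (\<xi> / \<xi>') * (noise_op \<xi> \<circ> transfer_op T) f x \<le> (noise_op \<xi>' \<circ> transfer_op T) f x"
    if "integrable I01 f" "AE x in I01. 0 \<le> f x" for f
    using noise_op_mono_width[OF assms(2) wider markov_map.integrable_image[OF L that(1)]
        markov_map.image_nonneg[OF L that]] by simp
  have "0 < \<xi>'" "0 < \<xi> / \<xi>'" "\<xi> / \<xi>' \<le> 1" using assms(2) wider by auto
  then show "opnorm_V ((noise_op \<xi>' \<circ> transfer_op T) ^^ i) < 1 \<and> mixing T \<xi>'"
    unfolding mixing_def
    by (intro opnorm_V_less_one_and_mixing_if_dominates[OF noisy_L noisy_L[OF assms(2)] _ _ dom assms(3)])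
qed

end
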